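(* Let $B$ be a Horn program, $E^+,E^-$ finite sets of ground atoms, and $H_1,H_2,H_3\in\mathcal{H}_{D,C}$ hypotheses with $H_3$ a generalization of $H_1$. If $S_{ACC}(H_2,B,E^+,E^-) - S_{ACC}(H_1,B,E^+,E^-) > fn(H_1,B,E^+)$, then $S_{ACC}(H_2,B,E^+,E^-) > S_{ACC}(H_3,B,E^+,E^-)$.
   Context: A definite clause is a clause with exactly one positive literal. A hypothesis is a finite set of definite clauses; $\mathcal{H}_{D,C}$ denotes the hypothesis space of hypotheses consistent with a declaration bias $D$ and hypothesis constraints $C$ (only membership matters). $B$ is background knowledge, $E^+$ positive and $E^-$ negative examples. For a hypothesis $H$: $tp(H,B,E^+)=|\{e\in E^+ : H\cup B\models e\}|$, $tn(H,B,E^-)=|\{e\in E^- : H\cup B\not\models e\}|$, $fn(H,B,E^+)=|E^+|-tp(H,B,E^+)$, $fp(H,B,E^-)=|E^-|-tn(H,B,E^-)$, and $S_{ACC}(H,B,E^+,E^-)=tp(H,B,E^+)+tn(H,B,E^-)$. A clause $C_1$ subsumes a clause $C_2$ iff there is a substitution $\theta$ with $C_1\theta\subseteq C_2$. A clausal theory $T_1$ subsumes $T_2$ ($T_1\preceq T_2$) iff every clause of $T_2$ is subsumed by some clause of $T_1$. $T_1$ is a generalization of $T_2$ iff $T_1\preceq T_2$, and a specialization of $T_2$ iff $T_2\preceq T_1$. *)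

theory Defs
  imports Main
begin

datatype ('f, 'v) trm = Var 'v | Fn 'f "('f, 'v) trm list"

type_synonym ('p, 'f, 'v) atom = "'p \<times> ('f, 'v) trm list"

datatype ('p, 'f, 'v) lit = Pos "('p, 'f, 'v) atom" | Neg "('p, 'f, 'v) atom"

type_synonym ('p, 'f, 'v) clause = "('p, 'f, 'v) lit set"

fun vars_trm :: "('f, 'v) trm \<Rightarrow> 'v set" where
  "vars_trm (Var x) = {x}"
| "vars_trm (Fn f ts) = \<Union> (set (map vars_trm ts))"

fun subst_trm :: "('v \<Rightarrow> ('f, 'v) trm) \<Rightarrow> ('f, 'v) trm \<Rightarrow> ('f, 'v) trm" where
  "subst_trm \<sigma> (Var x) = \<sigma> x"
| "subst_trm \<sigma> (Fn f ts) = Fn f (map (subst_trm \<sigma>) ts)"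

definition subst_atom :: "('v \<Rightarrow> ('f, 'v) trm) \<Rightarrow> ('p, 'f, 'v) atom \<Rightarrow> ('p, 'f, 'v) atom" where
  "subst_atom \<sigma> a = (fst a, map (subst_trm \<sigma>) (snd a))"

fun subst_lit :: "('v \<Rightarrow> ('f, 'v) trm) \<Rightarrow> ('p, 'f, 'v) lit \<Rightarrow> ('p, 'f, 'v) lit" where
  "subst_lit \<sigma> (Pos a) = Pos (subst_atom \<sigma> a)"
| "subst_lit \<sigma> (Neg a) = Neg (subst_atom \<sigma> a)"

definition subst_clause :: "('v \<Rightarrow> ('f, 'v) trm) \<Rightarrow> ('p, 'f, 'v) clause \<Rightarrow> ('p, 'f, 'v) clause" where
  "subst_clause \<sigma> C = subst_lit \<sigma> ` C"

definition ground_trm :: "('f, 'v) trm \<Rightarrow> bool" where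
  "ground_trm t \<longleftrightarrow> vars_trm t = {}"

definition ground_atom :: "('p, 'f, 'v) atom \<Rightarrow> bool" where
  "ground_atom a \<longleftrightarrow> (\<forall>t \<in> set (snd a). ground_trm t)"

fun is_pos :: "('p, 'f, 'v) lit \<Rightarrow> bool" where
  "is_pos (Pos _) = True"
| "is_pos (Neg _) = False"

definition definite_clause :: "('p, 'f, 'v) clause \<Rightarrow> bool" where
  "definite_clause C \<longleftrightarrow> finite C \<and> card {l \<in> C. is_pos l} = 1"

definition horn_program :: "('p, 'f, 'v) clause set \<Rightarrow> bool" where
  "horn_program B \<longleftrightarrow> finite B \<and> (\<forall>C \<in> B. definite_clause C)"

definition hypothesis :: "('p, 'f, 'v) clause set \<Rightarrow> bool" where
  "hypothesis H \<longleftrightarrow> finite H \<and> (\<forall>C \<in> H. definite_clause C)"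

definition herbrand_interp :: "('p, 'f, 'v) atom set \<Rightarrow> bool" where
  "herbrand_interp I \<longleftrightarrow> (\<forall>a \<in> I. ground_atom a)"

fun lit_true :: "('p, 'f, 'v) atom set \<Rightarrow> ('p, 'f, 'v) lit \<Rightarrow> bool" where
  "lit_true I (Pos a) = (a \<in> I)"
| "lit_true I (Neg a) = (a \<notin> I)"

definition clause_true :: "('p, 'f, 'v) atom set \<Rightarrow> ('p, 'f, 'v) clause \<Rightarrow> bool" where
  "clause_true I C \<longleftrightarrow>
     (\<forall>\<sigma>. (\<forall>x. ground_trm (\<sigma> x)) \<longrightarrow> (\<exists>l \<in> subst_clause \<sigma> C. lit_true I l))"

definition is_model :: "('p, 'f, 'v) atom set \<Rightarrow> ('p, 'f, 'v) clause set \<Rightarrow> bool" where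
  "is_model I T \<longleftrightarrow> herbrand_interp I \<and> (\<forall>C \<in> T. clause_true I C)"

definition entails :: "('p, 'f, 'v) clause set \<Rightarrow> ('p, 'f, 'v) atom \<Rightarrow> bool" where
  "entails T e \<longleftrightarrow> (\<forall>I. is_model I T \<longrightarrow> e \<in> I)"

definition subsumes_clause :: "('p, 'f, 'v) clause \<Rightarrow> ('p, 'f, 'v) clause \<Rightarrow> bool" where
  "subsumes_clause C1 C2 \<longleftrightarrow> (\<exists>\<theta>. subst_clause \<theta> C1 \<subseteq> C2)"

definition theory_subsumes :: "('p, 'f, 'v) clause set \<Rightarrow> ('p, 'f, 'v) clause set \<Rightarrow> bool" where
  "theory_subsumes T1 T2 \<longleftrightarrow> (\<forall>C2 \<in> T2. \<exists>C1 \<in> T1. subsumes_clause C1 C2)"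

definition generalization :: "('p, 'f, 'v) clause set \<Rightarrow> ('p, 'f, 'v) clause set \<Rightarrow> bool" where
  "generalization T1 T2 \<longleftrightarrow> theory_subsumes T1 T2"

definition tp :: "('p, 'f, 'v) clause set \<Rightarrow> ('p, 'f, 'v) clause set \<Rightarrow> ('p, 'f, 'v) atom set \<Rightarrow> nat" where
  "tp H B Ep = card {e \<in> Ep. entails (H \<union> B) e}"

definition tn :: "('p, 'f, 'v) clause set \<Rightarrow> ('p, 'f, 'v) clause set \<Rightarrow> ('p, 'f, 'v) atom set \<Rightarrow> nat" where
  "tn H B En = card {e \<in> En. \<not> entails (H \<union> B) e}"

definition fn :: "('p, 'f, 'v) clause set \<Rightarrow> ('p, 'f, 'v) clause set \<Rightarrow> ('p, 'f, 'v) atom set \<Rightarrow> nat" where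
  "fn H B Ep = card Ep - tp H B Ep"

definition fp :: "('p, 'f, 'v) clause set \<Rightarrow> ('p, 'f, 'v) clause set \<Rightarrow> ('p, 'f, 'v) atom set \<Rightarrow> nat" where
  "fp H B En = card En - tn H B En"

definition S_ACC :: "('p, 'f, 'v) clause set \<Rightarrow> ('p, 'f, 'v) clause set \<Rightarrow> ('p, 'f, 'v) atom set \<Rightarrow> ('p, 'f, 'v) atom set \<Rightarrow> nat" where
  "S_ACC H B Ep En = tp H B Ep + tn H B En"

end

theory Submission
  imports Defs
begin

text \<open>
  Subsumption preserves truth of clauses, so every Herbrand model of a generalization \<open>H\<^sub>3\<close>
  of \<open>H\<^sub>1\<close> (together with \<open>B\<close>) is a model of \<open>H\<^sub>1\<close>, and \<open>H\<^sub>3\<close> entails everything \<open>H\<^sub>1\<close> entails.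
  Hence \<open>H\<^sub>3\<close> has no more true negatives than \<open>H\<^sub>1\<close>, and it can gain at most the \<open>fn H\<^sub>1\<close>
  positives that \<open>H\<^sub>1\<close> misses: \<open>S_ACC H\<^sub>3 \<le> S_ACC H\<^sub>1 + fn H\<^sub>1 < S_ACC H\<^sub>2\<close>.
\<close>

lemma subst_trm_subst_trm: "subst_trm \<sigma> (subst_trm \<theta> t) = subst_trm (subst_trm \<sigma> \<circ> \<theta>) t"
  by (induction t) auto

lemma subst_lit_subst_lit: "subst_lit \<sigma> (subst_lit \<theta> l) = subst_lit (subst_trm \<sigma> \<circ> \<theta>) l"
  by (cases l) (auto simp: subst_atom_def subst_trm_subst_trm)

lemma subst_clause_subst_clause:
  "subst_clause \<sigma> (subst_clause \<theta> C) = subst_clause (subst_trm \<sigma> \<circ> \<theta>) C"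
  by (auto simp: subst_clause_def subst_lit_subst_lit image_image)

lemma ground_trm_subst_trm: "(\<And>x. ground_trm (\<sigma> x)) \<Longrightarrow> ground_trm (subst_trm \<sigma> t)"
  unfolding ground_trm_def by (induction t) auto

lemma subst_trm_Var: "subst_trm Var t = t"
  by (induction t) (auto simp: map_idI)

lemma subst_clause_Var:
  fixes C :: "('p, 'f, 'v) clause"
  shows "subst_clause Var C = C"
proof -
  have "subst_lit Var l = l" for l :: "('p, 'f, 'v) lit"
    by (cases l) (auto simp: subst_atom_def subst_trm_Var map_idI)
  then show ?thesis
    by (auto simp: subst_clause_def)
qed

lemma subsumes_clause_refl: "subsumes_clause C C"
  unfolding subsumes_clause_def using subst_clause_Var by blast

lemma clause_true_if_subsumes_clause:
  fixes C\<^sub>1 C\<^sub>2 :: "('p, 'f, 'v) clause"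
  assumes "subsumes_clause C\<^sub>1 C\<^sub>2" and "clause_true I C\<^sub>1"
  shows "clause_true I C\<^sub>2"
  unfolding clause_true_def
proof (intro allI impI)
  fix \<sigma> :: "'v \<Rightarrow> ('f, 'v) trm"
  assume ground: "\<forall>x. ground_trm (\<sigma> x)"
  from assms(1) obtain \<theta> where \<theta>: "subst_clause \<theta> C\<^sub>1 \<subseteq> C\<^sub>2"
    unfolding subsumes_clause_def by blast
  have "\<forall>x. ground_trm ((subst_trm \<sigma> \<circ> \<theta>) x)"
    using ground by (simp add: ground_trm_subst_trm)
  with assms(2) obtain l where "l \<in> subst_clause \<sigma> (subst_clause \<theta> C\<^sub>1)" "lit_true I l"
    unfolding clause_true_def subst_clause_subst_clause by blast
  moreover have "subst_clause \<sigma> (subst_clause \<theta> C\<^sub>1) \<subseteq> subst_clause \<sigma> C\<^sub>2"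
    using \<theta> unfolding subst_clause_def by blast
  ultimately show "\<exists>l \<in> subst_clause \<sigma> C\<^sub>2. lit_true I l"
    by blast
qed

lemma theory_subsumes_Un: "theory_subsumes T\<^sub>1 T\<^sub>2 \<Longrightarrow> theory_subsumes (T\<^sub>1 \<union> B) (T\<^sub>2 \<union> B)"
  unfolding theory_subsumes_def using subsumes_clause_refl by blast

lemma is_model_if_theory_subsumes:
  "theory_subsumes T\<^sub>1 T\<^sub>2 \<Longrightarrow> is_model I T\<^sub>1 \<Longrightarrow> is_model I T\<^sub>2"
  unfolding is_model_def theory_subsumes_def using clause_true_if_subsumes_clause by blast

lemma entails_if_theory_subsumes: "theory_subsumes T\<^sub>1 T\<^sub>2 \<Longrightarrow> entails T\<^sub>2 e \<Longrightarrow> entails T\<^sub>1 e"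
  unfolding entails_def using is_model_if_theory_subsumes by blast

lemma entails_generalization:
  "generalization H' H \<Longrightarrow> entails (H \<union> B) e \<Longrightarrow> entails (H' \<union> B) e"
  unfolding generalization_def using entails_if_theory_subsumes theory_subsumes_Un by blast

lemma tp_le_card: "finite Ep \<Longrightarrow> tp H B Ep \<le> card Ep"
  unfolding tp_def by (intro card_mono) auto

lemma tn_generalization_le:
  "generalization H' H \<Longrightarrow> finite En \<Longrightarrow> tn H' B En \<le> tn H B En"
  unfolding tn_def by (intro card_mono) (auto dest: entails_generalization[of H' H B])

lemma S_ACC_generalization_le:
  assumes "generalization H' H" and "finite Ep" and "finite En"
  shows "S_ACC H' B Ep En \<le> S_ACC H B Ep En + fn H B Ep"
  using tp_le_card[of Ep H' B] tp_le_card[of Ep H B] tn_generalization_le[of H' H En B] assms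
  unfolding S_ACC_def fn_def by linarith

theorem proposition4p3:
  fixes B :: "('p, 'f, 'v) clause set"
    and Ep En :: "('p, 'f, 'v) atom set"
    and HDC :: "('p, 'f, 'v) clause set set"
    and H1 H2 H3 :: "('p, 'f, 'v) clause set"
  assumes "horn_program B"
    and "finite Ep" and "\<forall>e \<in> Ep. ground_atom e"
    and "finite En" and "\<forall>e \<in> En. ground_atom e"
    and "\<forall>H \<in> HDC. hypothesis H"
    and "H1 \<in> HDC" and "H2 \<in> HDC" and "H3 \<in> HDC"
    and "generalization H3 H1"
    and "int (S_ACC H2 B Ep En) - int (S_ACC H1 B Ep En) > int (fn H1 B Ep)"
  shows "S_ACC H2 B Ep En > S_ACC H3 B Ep En"
  using S_ACC_generalization_le[OF assms(10,2,4), of B] assms(11) by linarith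

end
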